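(* Let $d,m$ be positive integers with $d\mid m$. Then $P(d,n)$ divides $P(m,n)$ for every positive integer $n$.
   Context: For positive integers $m,n$, let $\mathbf{Z}_m$ be the integers modulo $m$ and $T:\mathbf{Z}_m^n\to\mathbf{Z}_m^n$, $T(a_0,\dots,a_{n-1})=(a_0+a_1,a_1+a_2,\dots,a_{n-1}+a_0)$. For $\mathbf{a}\in\mathbf{Z}_m^n$ the cycle length of $(T^k\mathbf{a})_{k\ge0}$ is the smallest positive integer $P$ such that there is $N$ with $T^{k+P}\mathbf{a}=T^k\mathbf{a}$ for all $k\ge N$. $P(m,n)$ denotes the maximum of these cycle lengths over all $\mathbf{a}\in\mathbf{Z}_m^n$. *)

theory Defs
  imports Main
begin

text \<open>Elements of Z_m^n are represented as functions nat => int with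
  a i in {0..<m} for i < n (canonical residues) and a i = 0 for i >= n.\<close>

definition vecs :: "nat \<Rightarrow> nat \<Rightarrow> (nat \<Rightarrow> int) set" where
  "vecs m n = {a. (\<forall>i<n. a i \<in> {0..<int m}) \<and> (\<forall>i. n \<le> i \<longrightarrow> a i = 0)}"

definition Tmap :: "nat \<Rightarrow> nat \<Rightarrow> (nat \<Rightarrow> int) \<Rightarrow> (nat \<Rightarrow> int)" where
  "Tmap m n a = (\<lambda>i. if i < n then (a i + a ((i + 1) mod n)) mod int m else 0)"

definition cycle_length :: "nat \<Rightarrow> nat \<Rightarrow> (nat \<Rightarrow> int) \<Rightarrow> nat" where
  "cycle_length m n a =
     (LEAST P. 0 < P \<and> (\<exists>N. \<forall>k\<ge>N. (Tmap m n ^^ (k + P)) a = (Tmap m n ^^ k) a))"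

definition Pmax :: "nat \<Rightarrow> nat \<Rightarrow> nat" where
  "Pmax m n = Max (cycle_length m n ` vecs m n)"

end

theory Submission
  imports Defs
begin

text \<open>T is the reduction mod m of the integer linear map a \<mapsto> a + (cyclic shift of a),
  which commutes with every circulant (cyclic convolution) map. So each a in Z_m^n is the image
  of e_0 = (1,0,...,0) under a map commuting with T, namely convolution with a; hence the
  eventual period of a divides that of e_0, and P(m,n) is the eventual period of e_0.
  For d dvd m, reduction mod d also commutes with T and sends e_0 to e_0, so the period of
  e_0 over Z_d divides that over Z_m.\<close>

definition eventually_periodic :: "('a \<Rightarrow> 'a) \<Rightarrow> 'a \<Rightarrow> nat \<Rightarrow> bool" where
  "eventually_periodic f x p \<longleftrightarrow> (\<exists>N. \<forall>k\<ge>N. (f ^^ (k + p)) x = (f ^^ k) x)"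

definition eventual_period :: "('a \<Rightarrow> 'a) \<Rightarrow> 'a \<Rightarrow> nat" where
  "eventual_period f x = (LEAST p. 0 < p \<and> eventually_periodic f x p)"

lemma eventually_periodic_diff:
  assumes "eventually_periodic f x p" "eventually_periodic f x q" "p \<le> q"
  shows "eventually_periodic f x (q - p)"
proof -
  obtain N1 where N1: "\<forall>k\<ge>N1. (f ^^ (k + p)) x = (f ^^ k) x"
    using assms(1) unfolding eventually_periodic_def by blast
  obtain N2 where N2: "\<forall>k\<ge>N2. (f ^^ (k + q)) x = (f ^^ k) x"
    using assms(2) unfolding eventually_periodic_def by blast
  have "(f ^^ (k + (q - p))) x = (f ^^ k) x" if "k \<ge> max N1 N2" for k
  proof -
    have "(f ^^ (k + (q - p))) x = (f ^^ (k + (q - p) + p)) x" using N1 that by simp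
    also have "\<dots> = (f ^^ (k + q)) x" using assms(3) by simp
    also have "\<dots> = (f ^^ k) x" using N2 that by simp
    finally show ?thesis .
  qed
  then show ?thesis unfolding eventually_periodic_def by blast
qed

lemma
  assumes "0 < p" "eventually_periodic f x p"
  shows eventual_period_pos: "0 < eventual_period f x"
    and eventually_periodic_eventual_period: "eventually_periodic f x (eventual_period f x)"
  using LeastI[of "\<lambda>p. 0 < p \<and> eventually_periodic f x p", OF conjI[OF assms]]
  unfolding eventual_period_def by auto

lemma eventual_period_dvd:
  assumes "0 < p" "eventually_periodic f x p"
  shows "eventual_period f x dvd p"
  using assms
proof (induction p rule: less_induct)
  case (less p)
  define c where "c = eventual_period f x"
  have c: "0 < c" "eventually_periodic f x c"
    using eventual_period_pos[OF less.prems] eventually_periodic_eventual_period[OF less.prems]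
    unfolding c_def by auto
  have "c \<le> p"
    unfolding c_def eventual_period_def by (rule Least_le) (use less.prems in blast)
  show ?case
  proof (cases "c = p")
    case False
    with \<open>c \<le> p\<close> c(1) have "p - c < p" "0 < p - c"
      by simp_all
    moreover have "eventually_periodic f x (p - c)"
      using eventually_periodic_diff[OF c(2) less.prems(2) \<open>c \<le> p\<close>] .
    ultimately have "c dvd p - c"
      unfolding c_def by (rule less.IH)
    then show ?thesis
      using \<open>c \<le> p\<close> unfolding c_def by (rule dvd_diffD[OF _ dvd_refl])
  qed (simp add: c_def)
qed

lemma eventually_periodic_finite_orbit:
  assumes "finite A" "\<And>k. (f ^^ k) x \<in> A"
  obtains p where "0 < p" "eventually_periodic f x p"
proof -
  have "finite (range (\<lambda>k. (f ^^ k) x))"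
    using assms by (meson finite_subset image_subsetI)
  then have "\<not> inj (\<lambda>k. (f ^^ k) x)"
    using finite_imageD by blast
  then obtain i j where ij: "i < j" "(f ^^ i) x = (f ^^ j) x"
    unfolding inj_def by (metis linorder_neqE_nat)
  have "(f ^^ (k + (j - i))) x = (f ^^ k) x" if "k \<ge> i" for k
  proof -
    have "k + (j - i) = (k - i) + j"
      using that ij(1) by simp
    then have "(f ^^ (k + (j - i))) x = (f ^^ (k - i)) ((f ^^ j) x)"
      by (simp only: funpow_add comp_apply)
    also have "\<dots> = (f ^^ ((k - i) + i)) x"
      by (simp only: ij(2) funpow_add comp_apply)
    also have "\<dots> = (f ^^ k) x"
      using that by simp
    finally show ?thesis .
  qed
  then have "eventually_periodic f x (j - i)"
    unfolding eventually_periodic_def by blast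
  then show ?thesis
    using ij(1) by (intro that) simp_all
qed

lemma funpow_semiconj:
  assumes "\<And>y. h (f y) = g (h y)"
  shows "(g ^^ k) (h x) = h ((f ^^ k) x)"
  by (induction k) (simp_all add: assms)

lemma eventual_period_semiconj_dvd:
  assumes "\<And>y. h (f y) = g (h y)" "0 < p" "eventually_periodic f x p"
  shows "eventual_period g (h x) dvd eventual_period f x"
proof (rule eventual_period_dvd)
  show "0 < eventual_period f x"
    using eventual_period_pos[OF assms(2,3)] .
  show "eventually_periodic g (h x) (eventual_period f x)"
    using eventually_periodic_eventual_period[OF assms(2,3)]
    unfolding eventually_periodic_def funpow_semiconj[of h f g, OF assms(1)] by metis
qed

lemma cycle_length_eq_eventual_period:
  "cycle_length m n a = eventual_period (Tmap m n) a"
  by (simp add: cycle_length_def eventual_period_def eventually_periodic_def)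

lemma finite_vecs: "finite (vecs m n)"
proof -
  have "vecs m n = {a. \<forall>i. (i \<in> {..<n} \<longrightarrow> a i \<in> {0..<int m}) \<and> (i \<notin> {..<n} \<longrightarrow> a i = 0)}"
    by (auto simp: vecs_def)
  also have "finite \<dots>"
    by (rule finite_set_of_finite_funs) simp_all
  finally show ?thesis .
qed

lemma Tmap_vecs: "0 < m \<Longrightarrow> a \<in> vecs m n \<Longrightarrow> Tmap m n a \<in> vecs m n"
  by (auto simp: vecs_def Tmap_def)

lemma eventually_periodic_Tmap:
  assumes "0 < m" "a \<in> vecs m n"
  obtains p where "0 < p" "eventually_periodic (Tmap m n) a p"
proof (rule eventually_periodic_finite_orbit[OF finite_vecs])
  show "(Tmap m n ^^ k) a \<in> vecs m n" for k
    by (induction k) (simp_all add: assms Tmap_vecs)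
qed

definition delta0 :: "nat \<Rightarrow> nat \<Rightarrow> int" where
  "delta0 m = (\<lambda>i. if i = 0 then 1 mod int m else 0)"

lemma delta0_vecs: "0 < m \<Longrightarrow> 0 < n \<Longrightarrow> delta0 m \<in> vecs m n"
  by (auto simp: vecs_def delta0_def)

definition reduce :: "nat \<Rightarrow> (nat \<Rightarrow> int) \<Rightarrow> (nat \<Rightarrow> int)" where
  "reduce d b = (\<lambda>i. b i mod int d)"

lemma Tmap_reduce:
  assumes "d dvd m"
  shows "reduce d (Tmap m n b) = Tmap d n (reduce d b)"
proof -
  have dm: "int d dvd int m" using assms by simp
  show ?thesis
    by (auto simp: fun_eq_iff reduce_def Tmap_def mod_mod_cancel[OF dm] mod_add_eq)
qed

lemma reduce_delta0: "d dvd m \<Longrightarrow> reduce d (delta0 m) = delta0 d"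
  by (auto simp: fun_eq_iff reduce_def delta0_def mod_mod_cancel)

lemma sum_mult_mod_right:
  fixes a u :: "'a \<Rightarrow> 'b :: euclidean_semiring_cancel"
  shows "(\<Sum>j\<in>A. a j * (u j mod m)) mod m = (\<Sum>j\<in>A. a j * u j) mod m"
proof -
  have "(\<Sum>j\<in>A. a j * (u j mod m)) mod m = (\<Sum>j\<in>A. a j * (u j mod m) mod m) mod m"
    by (rule mod_sum_eq[symmetric])
  also have "\<dots> = (\<Sum>j\<in>A. a j * u j mod m) mod m"
    by (simp only: mod_mult_right_eq)
  also have "\<dots> = (\<Sum>j\<in>A. a j * u j) mod m"
    by (rule mod_sum_eq)
  finally show ?thesis .
qed

lemma add_diff_mod_eq_0_iff:
  fixes i j n :: nat
  assumes "i < n" "j < n"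
  shows "(i + n - j) mod n = 0 \<longleftrightarrow> j = i"
proof (cases "j \<le> i")
  case True
  then have "(i + n - j) mod n = ((i - j) + n) mod n"
    by (simp only: diff_add_assoc2)
  also have "\<dots> = i - j"
    using assms(1) by simp
  finally show ?thesis
    using True by auto
next
  case False
  then have "0 < i + n - j" "i + n - j < n" using assms by auto
  then show ?thesis using False by simp
qed

text \<open>Cyclic convolution with a over Z_m; the index (i + n - j) mod n is i - j modulo n,
  written so as to avoid truncated subtraction.\<close>

definition circulant :: "nat \<Rightarrow> nat \<Rightarrow> (nat \<Rightarrow> int) \<Rightarrow> (nat \<Rightarrow> int) \<Rightarrow> (nat \<Rightarrow> int)" where
  "circulant m n a b =
     (\<lambda>i. if i < n then (\<Sum>j<n. a j * b ((i + n - j) mod n)) mod int m else 0)"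

lemma Tmap_circulant: "circulant m n a (Tmap m n b) = Tmap m n (circulant m n a b)"
proof
  fix i
  have shift: "Suc ((i + n - j) mod n) mod n = (Suc i mod n + n - j) mod n" if "j < n" for j
  proof -
    have "i + n - j = i + (n - j)" "Suc i mod n + n - j = Suc i mod n + (n - j)"
      using that by auto
    then show ?thesis by (simp add: mod_add_left_eq mod_Suc_eq)
  qed
  show "circulant m n a (Tmap m n b) i = Tmap m n (circulant m n a b) i"
  proof (cases "i < n")
    case True
    have "circulant m n a (Tmap m n b) i =
      (\<Sum>j<n. a j * ((b ((i + n - j) mod n) + b (((i + n - j) mod n + 1) mod n)) mod int m)) mod int m"
      using True by (simp add: circulant_def Tmap_def)
    also have "\<dots> = (\<Sum>j<n. a j * b ((i + n - j) mod n) + a j * b (((i + 1) mod n + n - j) mod n))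
        mod int m"
      unfolding sum_mult_mod_right
      by (intro arg_cong[where f = "\<lambda>s. s mod int m"] sum.cong) (simp_all add: shift distrib_left)
    also have "\<dots> = Tmap m n (circulant m n a b) i"
      using True by (simp add: circulant_def Tmap_def sum.distrib mod_add_eq)
    finally show ?thesis .
  qed (simp add: circulant_def Tmap_def)
qed

lemma circulant_delta0:
  assumes "a \<in> vecs m n"
  shows "circulant m n a (delta0 m) = a"
proof
  fix i
  show "circulant m n a (delta0 m) i = a i"
  proof (cases "i < n")
    case True
    have "(\<Sum>j<n. a j * delta0 m ((i + n - j) mod n)) = (\<Sum>j<n. if j = i then a j * (1 mod int m) else 0)"
      using True by (intro sum.cong) (simp_all add: delta0_def add_diff_mod_eq_0_iff)
    then have "circulant m n a (delta0 m) i = a i * (1 mod int m) mod int m"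
      using True by (simp add: circulant_def)
    also have "\<dots> = a i"
      using True assms by (simp add: mod_mult_right_eq vecs_def)
    finally show ?thesis .
  qed (use assms in \<open>simp add: circulant_def vecs_def\<close>)
qed

lemma cycle_length_dvd_delta0:
  assumes "0 < m" "0 < n" "a \<in> vecs m n"
  shows "cycle_length m n a dvd cycle_length m n (delta0 m)"
proof -
  obtain p where "0 < p" "eventually_periodic (Tmap m n) (delta0 m) p"
    using eventually_periodic_Tmap[OF assms(1) delta0_vecs[OF assms(1,2)]] .
  from eventual_period_semiconj_dvd[where h = "circulant m n a", OF Tmap_circulant this]
  show ?thesis
    unfolding cycle_length_eq_eventual_period circulant_delta0[OF assms(3)] .
qed

lemma Pmax_eq_cycle_length_delta0:
  assumes "0 < m" "0 < n"
  shows "Pmax m n = cycle_length m n (delta0 m)"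
  unfolding Pmax_def
proof (rule Max_eqI[OF finite_imageI[OF finite_vecs]])
  obtain p where "0 < p" "eventually_periodic (Tmap m n) (delta0 m) p"
    using eventually_periodic_Tmap[OF assms(1) delta0_vecs[OF assms]] .
  then have "0 < cycle_length m n (delta0 m)"
    unfolding cycle_length_eq_eventual_period by (rule eventual_period_pos)
  then show "c \<le> cycle_length m n (delta0 m)" if "c \<in> cycle_length m n ` vecs m n" for c
    using that cycle_length_dvd_delta0[OF assms] by (auto intro: dvd_imp_le)
  show "cycle_length m n (delta0 m) \<in> cycle_length m n ` vecs m n"
    using delta0_vecs[OF assms] by blast
qed

theorem proposition3p1:
  fixes d m n :: nat
  assumes "0 < d" and "0 < m" and "d dvd m" and "0 < n"
  shows "Pmax d n dvd Pmax m n"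
proof -
  obtain p where "0 < p" "eventually_periodic (Tmap m n) (delta0 m) p"
    using eventually_periodic_Tmap[OF assms(2) delta0_vecs[OF assms(2,4)]] .
  from eventual_period_semiconj_dvd[where h = "reduce d", OF Tmap_reduce[OF assms(3)] this]
  have "cycle_length d n (delta0 d) dvd cycle_length m n (delta0 m)"
    unfolding cycle_length_eq_eventual_period reduce_delta0[OF assms(3)] .
  then show ?thesis
    using Pmax_eq_cycle_length_delta0 assms by simp
qed

end
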